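(* Let $\{f_j\}_{j=1}^m$, $m\ge2$, be an iterated function system of similarities of $\mathbb{C}$ with common contraction ratio $|\lambda|<1$ and connected attractor $A=\bigcup_j A_j$, $A_j=f_j(A)$, which is invertible with map $q:A\to A$ and has finite nonempty overlap set $\mathcal{O}$. Suppose $q$ is critically non-recurrent. Then there exist constants $C\ge1$ and $\delta_1>0$ such that for every connected set $S\subset A$ and every integer $n\ge0$, $$C^{-1}|\lambda|^{-n}\operatorname{diam}S\le\operatorname{diam}q^n(S)\le C|\lambda|^{-n}\operatorname{diam}S,$$ provided either $\operatorname{diam}q^n(S)<\delta_1$ or $|\lambda|^{-n}\operatorname{diam}S<\delta_1$.
   Context: Each $f_j$ is of the form $f_j(z)=|\lambda|e^{i\theta_j}z+d_j$ or $f_j(z)=|\lambda|e^{i\theta_j}\overline{z}+d_j$, and $A$ is the unique nonempty compact set with $A=\bigcup_j f_j(A)$. Invertible means there is a continuous $q:A\to A$ with $q|_{A_j}$ equal to the inverse of $f_j:A\to A_j$ for each $j$. The overlap set is $\mathcal{O}=\bigcup_{i\ne j}(A_i\cap A_j)$. $q$ is critically non-recurrent if for every $z\in\mathcal{O}$ the limit set of $\{q^n(z)\}_{n\ge1}$ does not contain $z$. *)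

theory Defs
  imports "HOL-Analysis.Analysis"
begin

definition similarity_ratio :: "real \<Rightarrow> (complex \<Rightarrow> complex) \<Rightarrow> bool" where
  "similarity_ratio r g \<longleftrightarrow>
     (\<exists>a d. norm a = r \<and> (g = (\<lambda>z. a * z + d) \<or> g = (\<lambda>z. a * cnj z + d)))"

definition ifs_attractor :: "nat \<Rightarrow> (nat \<Rightarrow> complex \<Rightarrow> complex) \<Rightarrow> complex set \<Rightarrow> bool" where
  "ifs_attractor m f A \<longleftrightarrow> A \<noteq> {} \<and> compact A \<and> A = (\<Union>j<m. f j ` A)"

definition ifs_inverse_map ::
  "nat \<Rightarrow> (nat \<Rightarrow> complex \<Rightarrow> complex) \<Rightarrow> complex set \<Rightarrow> (complex \<Rightarrow> complex) \<Rightarrow> bool" where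
  "ifs_inverse_map m f A q \<longleftrightarrow>
     continuous_on A q \<and> q ` A \<subseteq> A \<and> (\<forall>j<m. \<forall>z\<in>A. q (f j z) = z)"

definition overlap_set :: "nat \<Rightarrow> (nat \<Rightarrow> complex \<Rightarrow> complex) \<Rightarrow> complex set \<Rightarrow> complex set" where
  "overlap_set m f A = (\<Union>i<m. \<Union>j<m. if i \<noteq> j then f i ` A \<inter> f j ` A else {})"

definition orbit_limit_set :: "(complex \<Rightarrow> complex) \<Rightarrow> complex \<Rightarrow> complex set" where
  "orbit_limit_set q z =
     {w. \<forall>e>0. \<forall>N. \<exists>n\<ge>N. n \<ge> 1 \<and> dist ((q ^^ n) z) w < e}"

definition critically_non_recurrent :: "complex set \<Rightarrow> (complex \<Rightarrow> complex) \<Rightarrow> bool" where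
  "critically_non_recurrent Ov q \<longleftrightarrow> (\<forall>z\<in>Ov. z \<notin> orbit_limit_set q z)"

end

theory Submission
  imports Defs
begin

text \<open>On each piece A_j the map q is a similarity of ratio 1/r, so a connected set that misses
  the overlap set lies in a single piece and q expands its diameter by exactly 1/r; covering by
  the m pieces shows that any step of q distorts the diameter of a connected set by at most a
  factor m. Non-recurrence of the finitely many overlap points yields a scale \<eta> > 0 below which
  no overlap point returns close to itself, so while the iterates q^k(S) have diameter < \<eta>
  every overlap point is met at most once and the total distortion is at most m^#O. A small
  diameter at either end of the orbit propagates along the whole orbit through this estimate.\<close>

lemma diameter_Un_le:
  fixes X Y :: "'a::real_normed_vector set"
  assumes "bounded X" "bounded Y" "X \<inter> Y \<noteq> {}"
  shows "diameter (X \<union> Y) \<le> diameter X + diameter Y"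
proof (rule diameter_le)
  obtain x where x: "x \<in> X" "x \<in> Y" using assms(3) by blast
  have dX: "dist a b \<le> diameter X" if "a \<in> X" "b \<in> X" for a b
    using assms(1) that by (rule diameter_bounded_bound)
  have dY: "dist a b \<le> diameter Y" if "a \<in> Y" "b \<in> Y" for a b
    using assms(2) that by (rule diameter_bounded_bound)
  show "X \<union> Y \<noteq> {} \<or> 0 \<le> diameter X + diameter Y" using x by blast
  fix u v assume "u \<in> X \<union> Y" "v \<in> X \<union> Y"
  then have "dist u v \<le> diameter X + diameter Y"
  proof (elim UnE)
    assume "u \<in> X" "v \<in> X"
    then show ?thesis using dX dY[of x x] x by fastforce
  next
    assume "u \<in> Y" "v \<in> Y"
    then show ?thesis using dY dX[of x x] x by fastforce
  next
    assume "u \<in> X" "v \<in> Y"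
    then show ?thesis using dX[of u x] dY[of x v] dist_triangle[of u v x] x by linarith
  next
    assume "u \<in> Y" "v \<in> X"
    then show ?thesis using dY[of u x] dX[of x v] dist_triangle[of u v x] x by linarith
  qed
  then show "norm (u - v) \<le> diameter X + diameter Y" by (simp add: dist_norm)
qed

lemma connected_subset_member_of_closed_cover:
  assumes "connected S" "S \<subseteq> \<Union>T" "finite T" "\<forall>Y\<in>T. closed Y"
    and "X \<in> T" "S \<inter> X \<noteq> {}" "\<forall>Y\<in>T. Y \<noteq> X \<longrightarrow> S \<inter> X \<inter> Y = {}"
  shows "S \<subseteq> X"
proof -
  define B where "B = \<Union>(T - {X})"
  have "closed B" "closed X" using assms(3-5) by (auto simp: B_def)
  moreover have "X \<inter> B \<inter> S = {}" "S \<subseteq> X \<union> B" using assms(2,7) by (auto simp: B_def)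
  ultimately have "B \<inter> S = {}" using connected_closedD[OF assms(1)] assms(6) by blast
  then show ?thesis using \<open>S \<subseteq> X \<union> B\<close> by blast
qed

text \<open>Two members of the cover meeting inside S are merged into one, which does not increase
  the sum; once no two members meet inside S, connectedness puts S into a single member.\<close>
lemma diameter_le_sum_closed_cover:
  fixes S :: "'a::real_normed_vector set"
  assumes "finite T" "\<forall>X\<in>T. closed X" "connected S" "bounded S" "S \<subseteq> \<Union>T"
  shows "diameter S \<le> (\<Sum>X\<in>T. diameter (S \<inter> X))"
  using assms
proof (induction "card T" arbitrary: T rule: less_induct)
  case less
  have nonneg: "0 \<le> diameter (S \<inter> X)" for X
    using less.prems(4) by (meson bounded_subset diameter_ge_0 inf_le1)
  show ?case
  proof (cases "\<exists>X1\<in>T. \<exists>X2\<in>T. X1 \<noteq> X2 \<and> S \<inter> X1 \<inter> X2 \<noteq> {}")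
    case True
    then obtain X1 X2 where X12: "X1 \<in> T" "X2 \<in> T" "X1 \<noteq> X2" "S \<inter> X1 \<inter> X2 \<noteq> {}" by blast
    define R where "R = T - {X1, X2}"
    have T: "T = insert X1 (insert X2 R)" "X1 \<notin> insert X2 R" "X2 \<notin> R"
      using X12 by (auto simp: R_def)
    have finR: "finite R" using less.prems(1) by (simp add: R_def)
    have "card (insert (X1 \<union> X2) R) < card T"
      using finR T by (simp add: card_insert_if)
    moreover have "\<forall>X\<in>insert (X1 \<union> X2) R. closed X"
      using less.prems(2) X12 by (auto simp: R_def)
    moreover have "S \<subseteq> \<Union>(insert (X1 \<union> X2) R)"
      using less.prems(5) by (auto simp: R_def)
    ultimately have "diameter S \<le> (\<Sum>X\<in>insert (X1 \<union> X2) R. diameter (S \<inter> X))"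
      using less.prems(3,4) finR by (intro less.hyps) auto
    also have "\<dots> \<le> diameter (S \<inter> (X1 \<union> X2)) + (\<Sum>X\<in>R. diameter (S \<inter> X))"
      using finR nonneg by (simp add: sum.insert_if)
    also have "diameter (S \<inter> (X1 \<union> X2)) \<le> diameter (S \<inter> X1) + diameter (S \<inter> X2)"
      using diameter_Un_le[of "S \<inter> X1" "S \<inter> X2"] less.prems(4) X12(4)
      by (simp add: Int_Un_distrib bounded_Int inf_assoc inf_left_commute)
    also have "diameter (S \<inter> X1) + diameter (S \<inter> X2) + (\<Sum>X\<in>R. diameter (S \<inter> X))
        = (\<Sum>X\<in>T. diameter (S \<inter> X))"
      using finR T by simp
    finally show ?thesis by linarith
  next
    case False
    then have disjoint: "\<forall>Y\<in>T. Y \<noteq> X \<longrightarrow> S \<inter> X \<inter> Y = {}" if "X \<in> T" for X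
      using that by blast
    show ?thesis
    proof (cases "S = {}")
      case True
      then show ?thesis by (simp add: sum_nonneg)
    next
      case False
      then obtain X where X: "X \<in> T" "S \<inter> X \<noteq> {}" using less.prems(5) by blast
      then have "S \<subseteq> X"
        using connected_subset_member_of_closed_cover[OF less.prems(3,5,1,2) X] disjoint by blast
      then have "diameter S = diameter (S \<inter> X)" by (simp add: Int_absorb2)
      also have "\<dots> \<le> (\<Sum>X\<in>T. diameter (S \<inter> X))"
        using less.prems(1) X nonneg by (intro member_le_sum) auto
      finally show ?thesis .
    qed
  qed
qed

lemma diameter_le_sum_closed_cover_indexed:
  fixes S :: "'a::real_normed_vector set" and X :: "'i \<Rightarrow> 'a set"
  assumes "finite J" "\<And>j. j \<in> J \<Longrightarrow> closed (X j)" "connected S" "bounded S"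
    and "S \<subseteq> (\<Union>j\<in>J. X j)"
  shows "diameter S \<le> (\<Sum>j\<in>J. diameter (S \<inter> X j))"
proof -
  have "diameter S \<le> (\<Sum>Y\<in>X ` J. diameter (S \<inter> Y))"
    using assms by (intro diameter_le_sum_closed_cover) auto
  also have "\<dots> \<le> (\<Sum>j\<in>J. diameter (S \<inter> X j))"
    using sum_image_le[OF assms(1), of "\<lambda>Y. diameter (S \<inter> Y)" X] assms(4)
    by (simp add: bounded_Int diameter_ge_0 o_def)
  finally show ?thesis .
qed

lemma diameter_image_scaled:
  fixes X :: "'a::real_normed_vector set" and g :: "'a \<Rightarrow> 'b::real_normed_vector"
  assumes "bounded X" "c > 0" "\<And>x y. x \<in> X \<Longrightarrow> y \<in> X \<Longrightarrow> dist (g x) (g y) = c * dist x y"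
  shows "diameter (g ` X) = c * diameter X"
proof -
  have dX: "\<And>a b. a \<in> X \<Longrightarrow> b \<in> X \<Longrightarrow> dist a b \<le> diameter X"
    using assms(1) diameter_bounded_bound by blast
  have bounded: "bounded (g ` X)"
    unfolding bounded_two_points using dX assms by (force intro!: exI[of _ "c * diameter X"])
  have "diameter (g ` X) \<le> c * diameter X"
    by (rule diameter_le) (use assms diameter_ge_0 dX in \<open>auto simp: dist_norm[symmetric]\<close>)
  moreover have "diameter X \<le> diameter (g ` X) / c"
  proof (rule diameter_le)
    show "X \<noteq> {} \<or> 0 \<le> diameter (g ` X) / c"
      using assms(2) diameter_ge_0[OF bounded] by simp
    fix x y assume "x \<in> X" "y \<in> X"
    then have "c * dist x y \<le> diameter (g ` X)"
      using assms(3) diameter_bounded_bound[OF bounded] by (metis imageI)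
    then show "norm (x - y) \<le> diameter (g ` X) / c"
      using assms(2) by (simp add: field_simps dist_norm mult.commute)
  qed
  ultimately show ?thesis using assms(2) by (simp add: field_simps)
qed

lemma similarity_ratio_dist:
  assumes "similarity_ratio r g"
  shows "dist (g x) (g y) = r * dist x y"
proof -
  obtain a d where a: "norm a = r" and g: "g = (\<lambda>z. a * z + d) \<or> g = (\<lambda>z. a * cnj z + d)"
    using assms unfolding similarity_ratio_def by blast
  have "dist (g x) (g y) = norm a * norm (x - y)"
    using g by (auto simp: dist_norm norm_mult simp flip: right_diff_distrib complex_cnj_diff)
  then show ?thesis by (simp add: a dist_norm)
qed

lemma similarity_ratio_continuous_on:
  assumes "similarity_ratio r g"
  shows "continuous_on S g"
  using assms unfolding similarity_ratio_def by (auto intro!: continuous_intros)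

locale invertible_ifs =
  fixes m :: nat and f :: "nat \<Rightarrow> complex \<Rightarrow> complex" and r :: real
    and A :: "complex set" and q :: "complex \<Rightarrow> complex"
  assumes ratio_pos: "0 < r" and ratio_less_1: "r < 1"
    and similarity: "\<forall>j<m. similarity_ratio r (f j)"
    and attractor: "ifs_attractor m f A"
    and inverse: "ifs_inverse_map m f A q"
begin

lemma compact_attractor: "compact A"
  and attractor_eq: "A = (\<Union>j<m. f j ` A)"
  and bounded_subset_attractor: "S \<subseteq> A \<Longrightarrow> bounded S"
  using attractor compact_imp_bounded bounded_subset by (auto simp: ifs_attractor_def)

lemma number_of_maps_pos: "0 < m"
  using attractor by (auto simp: ifs_attractor_def)

lemma closed_piece: "j < m \<Longrightarrow> closed (f j ` A)"
  using similarity by (metis compact_attractor compact_continuous_image compact_imp_closed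
      similarity_ratio_continuous_on)

lemma continuous_on_q: "continuous_on A q"
  and q_image_subset: "q ` A \<subseteq> A"
  and q_inverse: "j < m \<Longrightarrow> z \<in> A \<Longrightarrow> q (f j z) = z"
  using inverse by (auto simp: ifs_inverse_map_def)

lemma diameter_q_image_piece:
  assumes "j < m" "X \<subseteq> f j ` A"
  shows "diameter (q ` X) = (1/r) * diameter X"
proof (rule diameter_image_scaled)
  show "bounded X" using assms attractor_eq by (intro bounded_subset_attractor) blast
  fix x y assume "x \<in> X" "y \<in> X"
  then obtain a b where "a \<in> A" "b \<in> A" "x = f j a" "y = f j b" using assms(2) by blast
  moreover have "dist (f j a) (f j b) = r * dist a b"
    using assms(1) similarity similarity_ratio_dist by blast
  ultimately show "dist (q x) (q y) = 1/r * dist x y"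
    using assms(1) q_inverse ratio_pos by simp
qed (use ratio_pos in simp)

lemma q_funpow_image_subset: "S \<subseteq> A \<Longrightarrow> (q ^^ k) ` S \<subseteq> A"
  using q_image_subset by (induction k) (auto simp: image_subset_iff)

lemma connected_q_funpow_image:
  assumes "S \<subseteq> A" "connected S"
  shows "connected ((q ^^ k) ` S)"
proof -
  have "continuous_on A (q ^^ k)"
  proof (induction k)
    case (Suc k)
    then show ?case
      using continuous_on_q q_funpow_image_subset[of A k]
      by (auto intro: continuous_on_compose2[of A q])
  qed (simp add: continuous_on_id)
  then show ?thesis using assms connected_continuous_image continuous_on_subset by blast
qed

lemma diameter_le_q_image:
  assumes "S \<subseteq> A" "connected S"
  shows "diameter S \<le> m * r * diameter (q ` S)"
proof -
  have bounded: "bounded (q ` S)"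
    using assms q_image_subset by (intro bounded_subset_attractor) blast
  have "diameter S \<le> (\<Sum>j<m. diameter (S \<inter> f j ` A))"
    using assms attractor_eq closed_piece bounded_subset_attractor
    by (intro diameter_le_sum_closed_cover_indexed) auto
  also have "\<dots> \<le> (\<Sum>j<m. r * diameter (q ` S))"
  proof (rule sum_mono)
    fix j assume "j \<in> {..<m}"
    then have "diameter (S \<inter> f j ` A) = r * diameter (q ` (S \<inter> f j ` A))"
      using diameter_q_image_piece[of j "S \<inter> f j ` A"] ratio_pos by auto
    also have "\<dots> \<le> r * diameter (q ` S)"
      using ratio_pos bounded by (intro mult_left_mono diameter_subset) auto
    finally show "diameter (S \<inter> f j ` A) \<le> r * diameter (q ` S)" .
  qed
  finally show ?thesis by simp
qed

lemma diameter_q_image_le: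
  assumes "S \<subseteq> A" "connected S"
  shows "diameter (q ` S) \<le> m * ((1/r) * diameter S)"
proof -
  define X where "X j = closure (q ` (S \<inter> f j ` A))" for j
  have bounded: "bounded (q ` S)" "bounded S"
    using assms q_image_subset by (auto intro: bounded_subset_attractor)
  have "q ` S \<subseteq> (\<Union>j<m. X j)"
  proof
    fix y assume "y \<in> q ` S"
    then obtain s j where "s \<in> S" "y = q s" "j < m" "s \<in> f j ` A"
      using assms(1) attractor_eq by blast
    then show "y \<in> (\<Union>j<m. X j)" unfolding X_def by (blast intro: closure_subset[THEN subsetD])
  qed
  moreover have "connected (q ` S)"
    using connected_q_funpow_image[OF assms, of 1] by simp
  ultimately have "diameter (q ` S) \<le> (\<Sum>j<m. diameter (q ` S \<inter> X j))"
    using bounded by (intro diameter_le_sum_closed_cover_indexed) (auto simp: X_def)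
  also have "\<dots> \<le> (\<Sum>j<m. (1/r) * diameter S)"
  proof (rule sum_mono)
    fix j assume j: "j \<in> {..<m}"
    have bounded_j: "bounded (q ` (S \<inter> f j ` A))"
      using bounded(1) by (rule bounded_subset) auto
    have "diameter (q ` S \<inter> X j) \<le> diameter (X j)"
      using bounded_j by (intro diameter_subset) (auto simp: X_def)
    also have "\<dots> = diameter (q ` (S \<inter> f j ` A))"
      using bounded_j by (simp add: X_def diameter_closure)
    also have "\<dots> = (1/r) * diameter (S \<inter> f j ` A)"
      using j by (intro diameter_q_image_piece) auto
    also have "\<dots> \<le> (1/r) * diameter S"
      using ratio_pos bounded by (intro mult_left_mono diameter_subset) auto
    finally show "diameter (q ` S \<inter> X j) \<le> (1/r) * diameter S" .
  qed
  finally show ?thesis by simp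
qed

text \<open>A connected set missing the overlap set lies in a single piece, on which q is a
  similarity of ratio 1/r.\<close>
lemma diameter_q_image_eq:
  assumes "S \<subseteq> A" "connected S" "S \<inter> overlap_set m f A = {}"
  shows "diameter (q ` S) = (1/r) * diameter S"
proof (cases "S = {}")
  case False
  define T where "T = (\<lambda>i. f i ` A) ` {..<m}"
  obtain j where j: "j < m" "S \<inter> f j ` A \<noteq> {}" using False assms(1) attractor_eq by blast
  have disjoint: "S \<inter> f j ` A \<inter> Y = {}" if Y: "Y \<in> T" "Y \<noteq> f j ` A" for Y
  proof -
    obtain i where i: "i < m" "i \<noteq> j" "Y = f i ` A" using Y by (auto simp: T_def)
    have "f i ` A \<inter> f j ` A \<subseteq> overlap_set m f A"
    proof
      fix z assume "z \<in> f i ` A \<inter> f j ` A"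
      then have "z \<in> (if i \<noteq> j then f i ` A \<inter> f j ` A else {})" using i by simp
      then show "z \<in> overlap_set m f A"
        unfolding overlap_set_def using i j by (intro UN_I[of i] UN_I[of j]) simp_all
    qed
    then show ?thesis using assms(3) i(3) by blast
  qed
  have cover: "S \<subseteq> \<Union>T"
    using assms(1) unfolding T_def by (simp flip: attractor_eq)
  have pieces: "finite T" "\<forall>Y\<in>T. closed Y" "f j ` A \<in> T"
    using closed_piece j(1) by (auto simp: T_def)
  have "S \<subseteq> f j ` A"
    by (intro connected_subset_member_of_closed_cover[OF assms(2) cover pieces j(2)]
        ballI impI disjoint)
  then show ?thesis using diameter_q_image_piece[OF j(1)] by blast
qed simp

end

lemma funpow_fixpoint_mult: "(g ^^ n) z = z \<Longrightarrow> (g ^^ (n * k)) z = z"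
  by (induction k) (simp_all add: funpow_add)

text \<open>A point outside its own orbit limit set is not periodic, since a periodic point recurs
  at arbitrarily late times; so all iterates stay uniformly away from it.\<close>
lemma orbit_separated_if_not_in_orbit_limit_set:
  assumes "z \<notin> orbit_limit_set g z"
  shows "\<exists>e>0. \<forall>n\<ge>1. e \<le> dist ((g ^^ n) z) z"
proof -
  obtain e N where e: "e > 0" "\<And>n. n \<ge> N \<Longrightarrow> n \<ge> 1 \<Longrightarrow> e \<le> dist ((g ^^ n) z) z"
    using assms unfolding orbit_limit_set_def by (auto simp: not_less)
  have not_periodic: "(g ^^ n) z \<noteq> z" if "n \<ge> 1" for n
  proof
    assume "(g ^^ n) z = z"
    then have "(g ^^ (n * (N + 1))) z = z" by (rule funpow_fixpoint_mult)
    moreover have "n * (N + 1) \<ge> N" "n * (N + 1) \<ge> 1"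
      using mult_le_mono1[OF that, of "N + 1"] by simp_all
    ultimately show False using e by fastforce
  qed
  define E where "E = insert e ((\<lambda>n. dist ((g ^^ n) z) z) ` {1..<N})"
  have "finite E" by (simp add: E_def)
  then have "Min E > 0" using e(1) not_periodic by (auto simp: E_def)
  moreover have "Min E \<le> dist ((g ^^ n) z) z" if "n \<ge> 1" for n
  proof (cases "n < N")
    case True
    then show ?thesis using \<open>finite E\<close> that by (intro Min_le) (auto simp: E_def)
  next
    case False
    then have "Min E \<le> e" using \<open>finite E\<close> by (intro Min_le) (auto simp: E_def)
    also have "e \<le> dist ((g ^^ n) z) z" using e False that by simp
    finally show ?thesis .
  qed
  ultimately show ?thesis by blast
qed

lemma uniform_orbit_separation:
  assumes "finite P" "\<forall>z\<in>P. z \<notin> orbit_limit_set g z"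
  shows "\<exists>\<eta>>0. \<forall>z\<in>P. \<forall>n\<ge>1. \<eta> \<le> dist ((g ^^ n) z) z"
proof -
  have "\<forall>z\<in>P. \<exists>e>0. \<forall>n\<ge>1. e \<le> dist ((g ^^ n) z) z"
    using orbit_separated_if_not_in_orbit_limit_set assms(2) by blast
  then obtain e where e: "\<forall>z\<in>P. e z > 0 \<and> (\<forall>n\<ge>1. e z \<le> dist ((g ^^ n) z) z)"
    by metis
  define \<eta> where "\<eta> = Min (insert 1 (e ` P))"
  have "\<eta> > 0" using assms(1) e by (simp add: \<eta>_def)
  moreover have "\<eta> \<le> e z" if "z \<in> P" for z
    using assms(1) that by (simp add: \<eta>_def)
  ultimately show ?thesis using e by force
qed

lemma two_sided_product_bound:
  fixes x c :: "nat \<Rightarrow> real" and \<rho> :: real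
  assumes "\<rho> \<ge> 0" "\<And>k. c k \<ge> 0"
    and step: "\<And>k. k \<in> {a..<a+n} \<Longrightarrow> x (Suc k) \<le> c k * (\<rho> * x k) \<and> \<rho> * x k \<le> c k * x (Suc k)"
  shows "x (a+n) \<le> prod c {a..<a+n} * (\<rho> ^ n * x a) \<and> \<rho> ^ n * x a \<le> prod c {a..<a+n} * x (a+n)"
  using step
proof (induction n)
  case (Suc n)
  let ?P = "prod c {a..<a+n}"
  have IH: "x (a+n) \<le> ?P * (\<rho> ^ n * x a)" "\<rho> ^ n * x a \<le> ?P * x (a+n)"
    using Suc by auto
  have last: "x (Suc (a+n)) \<le> c (a+n) * (\<rho> * x (a+n))" "\<rho> * x (a+n) \<le> c (a+n) * x (Suc (a+n))"
    using Suc.prems[of "a+n"] by auto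
  have P: "prod c {a..<a + Suc n} = ?P * c (a+n)" "?P \<ge> 0"
    using assms(2) by (simp_all add: prod_nonneg)
  have "x (Suc (a+n)) \<le> c (a+n) * (\<rho> * (?P * (\<rho> ^ n * x a)))"
    using last(1) IH(1) assms(1,2) by (smt (verit) mult_left_mono zero_le_mult_iff)
  moreover have "\<rho> * (\<rho> ^ n * x a) \<le> ?P * (c (a+n) * x (Suc (a+n)))"
    using IH(2) last(2) assms(1) P(2) by (smt (verit) mult_left_mono mult.left_commute)
  ultimately show ?case using P(1) by (simp add: ac_simps)
qed simp

context invertible_ifs
begin

definition distortion_bound :: real where
  "distortion_bound = real m ^ card (overlap_set m f A)"

lemma distortion_bound_ge_1: "distortion_bound \<ge> 1"
  using number_of_maps_pos by (simp add: distortion_bound_def)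

end

locale invertible_ifs_orbit = invertible_ifs +
  fixes S :: "complex set" and \<eta> :: real
  assumes finite_overlap: "finite (overlap_set m f A)"
    and orbit_start_subset: "S \<subseteq> A" and connected_orbit_start: "connected S"
    and overlap_separation: "\<forall>p\<in>overlap_set m f A. \<forall>n\<ge>1. \<eta> \<le> dist ((q ^^ n) p) p"
begin

definition orbit_diameter :: "nat \<Rightarrow> real" where
  "orbit_diameter k = diameter ((q ^^ k) ` S)"

definition overlap_times :: "nat set" where
  "overlap_times = {k. (q ^^ k) ` S \<inter> overlap_set m f A \<noteq> {}}"

lemma orbit_diameter_nonneg: "0 \<le> orbit_diameter k"
proof -
  have "(q ^^ k) ` S \<subseteq> A" using orbit_start_subset by (rule q_funpow_image_subset)
  then show ?thesis unfolding orbit_diameter_def by (intro diameter_ge_0 bounded_subset_attractor)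
qed

lemma orbit_diameter_step:
  fixes k :: nat
  defines "c \<equiv> if k \<in> overlap_times then real m else 1"
  shows "orbit_diameter (Suc k) \<le> c * ((1/r) * orbit_diameter k)
    \<and> (1/r) * orbit_diameter k \<le> c * orbit_diameter (Suc k)"
proof -
  define T where "T = (q ^^ k) ` S"
  have T: "T \<subseteq> A" "connected T"
    using orbit_start_subset connected_orbit_start
    by (simp_all add: T_def q_funpow_image_subset connected_q_funpow_image)
  have D: "orbit_diameter k = diameter T" "orbit_diameter (Suc k) = diameter (q ` T)"
    by (simp_all add: orbit_diameter_def T_def image_comp)
  show ?thesis
  proof (cases "k \<in> overlap_times")
    case True
    have "diameter T \<le> m * r * diameter (q ` T)" using diameter_le_q_image[OF T] .
    then have "(1/r) * diameter T \<le> m * diameter (q ` T)"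
      using ratio_pos by (simp add: field_simps)
    then show ?thesis
      using True diameter_q_image_le[OF T] by (simp add: c_def D)
  next
    case False
    then have "T \<inter> overlap_set m f A = {}" by (simp add: overlap_times_def T_def)
    then show ?thesis
      using False diameter_q_image_eq[OF T] by (simp add: c_def D)
  qed
qed

text \<open>While the orbit stays below the separation scale, an overlap point met at time k cannot
  be met again at a later time l: its image after l - k steps would lie in the same small set.\<close>
lemma card_overlap_times_le:
  assumes small: "\<forall>j\<in>{a..<b}. orbit_diameter j < \<eta>"
  shows "card ({a..<b} \<inter> overlap_times) \<le> card (overlap_set m f A)"
proof -
  have "\<forall>k\<in>overlap_times. \<exists>p. p \<in> (q ^^ k) ` S \<inter> overlap_set m f A"
    by (auto simp: overlap_times_def)
  then obtain p where p: "\<forall>k\<in>overlap_times. p k \<in> (q ^^ k) ` S \<inter> overlap_set m f A"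
    by metis
  have "p k \<noteq> p l"
    if kl: "k \<in> {a..<b} \<inter> overlap_times" "l \<in> {a..<b} \<inter> overlap_times" "k < l" for k l
  proof
    assume eq: "p k = p l"
    obtain s where s: "s \<in> S" "p k = (q ^^ k) s" using p kl(1) by blast
    have "(q ^^ (l - k)) (p k) = (q ^^ l) s"
      using s(2) kl(3) by (simp flip: funpow_add[unfolded comp_def, THEN fun_cong])
    then have "(q ^^ (l - k)) (p k) \<in> (q ^^ l) ` S" using s(1) by simp
    moreover have "p k \<in> (q ^^ l) ` S" using eq p kl(2) by auto
    moreover have "bounded ((q ^^ l) ` S)"
      using orbit_start_subset by (intro bounded_subset_attractor q_funpow_image_subset)
    ultimately have "dist ((q ^^ (l - k)) (p k)) (p k) \<le> orbit_diameter l"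
      unfolding orbit_diameter_def by (intro diameter_bounded_bound)
    also have "\<dots> < \<eta>" using small kl(2) by blast
    moreover have "\<eta> \<le> dist ((q ^^ (l - k)) (p k)) (p k)"
      using overlap_separation p kl(1,3) by simp
    ultimately show False by simp
  qed
  then have "inj_on p ({a..<b} \<inter> overlap_times)"
    by (intro linorder_inj_onI') blast
  moreover have "p ` ({a..<b} \<inter> overlap_times) \<subseteq> overlap_set m f A" using p by blast
  ultimately show ?thesis using finite_overlap by (rule card_inj_on_le)
qed

lemma orbit_diameter_distortion:
  assumes "\<forall>j\<in>{a..<a+n}. orbit_diameter j < \<eta>"
  shows "orbit_diameter (a+n) \<le> distortion_bound * ((1/r) ^ n * orbit_diameter a)
    \<and> (1/r) ^ n * orbit_diameter a \<le> distortion_bound * orbit_diameter (a+n)"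
proof -
  let ?c = "\<lambda>k. if k \<in> overlap_times then real m else 1"
  have "prod ?c {a..<a+n} = real m ^ card ({a..<a+n} \<inter> overlap_times)"
    by (simp add: prod.If_cases Int_def)
  also have "\<dots> \<le> distortion_bound"
    unfolding distortion_bound_def using number_of_maps_pos card_overlap_times_le[OF assms]
    by (intro power_increasing) auto
  finally have "prod ?c {a..<a+n} \<le> distortion_bound" .
  moreover have "orbit_diameter (a+n) \<le> prod ?c {a..<a+n} * ((1/r) ^ n * orbit_diameter a)
    \<and> (1/r) ^ n * orbit_diameter a \<le> prod ?c {a..<a+n} * orbit_diameter (a+n)"
    using ratio_pos orbit_diameter_step by (intro two_sided_product_bound) auto
  ultimately show ?thesis
    using orbit_diameter_nonneg ratio_pos
    by (smt (verit) mult_right_mono zero_le_divide_1_iff zero_le_mult_iff zero_le_power)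
qed

lemma orbit_diameter_small_forward:
  assumes "distortion_bound * ((1/r) ^ n * orbit_diameter 0) < \<eta>"
  shows "\<forall>j\<le>n. orbit_diameter j < \<eta>"
proof (intro allI impI)
  fix j assume "j \<le> n"
  then show "orbit_diameter j < \<eta>"
  proof (induction j rule: less_induct)
    case (less j)
    then have "orbit_diameter j \<le> distortion_bound * ((1/r) ^ j * orbit_diameter 0)"
      using orbit_diameter_distortion[of 0 j] by simp
    also have "\<dots> \<le> distortion_bound * ((1/r) ^ n * orbit_diameter 0)"
      using less.prems ratio_pos ratio_less_1 distortion_bound_ge_1 orbit_diameter_nonneg
      by (intro mult_left_mono mult_right_mono power_increasing) auto
    finally show ?case using assms by linarith
  qed
qed

lemma orbit_diameter_small_backward:
  assumes "m * distortion_bound * orbit_diameter n < \<eta>"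
  shows "\<forall>j\<le>n. orbit_diameter j < \<eta>"
proof -
  have m: "real m \<ge> 1" using number_of_maps_pos by simp
  have expansion: "1 \<le> 1/r" using ratio_pos ratio_less_1 by simp
  have "\<forall>j\<in>{k..n}. orbit_diameter j < \<eta>" if "k \<le> n" for k
    using that
  proof (induction k rule: inc_induct)
    case base
    have "1 \<le> real m * distortion_bound"
      using mult_mono[OF m distortion_bound_ge_1] by simp
    then have "orbit_diameter n \<le> m * distortion_bound * orbit_diameter n"
      using mult_right_mono[OF _ orbit_diameter_nonneg, of 1] by simp
    then show ?case using assms by simp
  next
    case (step k)
    have "\<forall>j\<in>{Suc k..<Suc k + (n - Suc k)}. orbit_diameter j < \<eta>" using step.IH by auto
    then have "(1/r) ^ (n - Suc k) * orbit_diameter (Suc k) \<le> distortion_bound * orbit_diameter n"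
      using orbit_diameter_distortion[of "Suc k" "n - Suc k"] step.hyps by simp
    moreover have "orbit_diameter (Suc k) \<le> (1/r) ^ (n - Suc k) * orbit_diameter (Suc k)"
      using mult_right_mono[OF one_le_power[OF expansion] orbit_diameter_nonneg] by simp
    ultimately have next_le: "orbit_diameter (Suc k) \<le> distortion_bound * orbit_diameter n"
      by linarith
    have "orbit_diameter k \<le> (1/r) * orbit_diameter k"
      using mult_right_mono[OF expansion orbit_diameter_nonneg] by simp
    also have "\<dots> \<le> (if k \<in> overlap_times then real m else 1) * orbit_diameter (Suc k)"
      using orbit_diameter_step[of k] by blast
    also have "\<dots> \<le> m * orbit_diameter (Suc k)"
      using m by (intro mult_right_mono orbit_diameter_nonneg) auto
    also have "\<dots> \<le> m * (distortion_bound * orbit_diameter n)"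
      using next_le by (intro mult_left_mono) auto
    finally have "orbit_diameter k < \<eta>" using assms by (simp add: mult.assoc)
    then show ?case using step.IH by (auto simp: le_less Suc_le_eq)
  qed
  then show ?thesis by auto
qed

lemma orbit_diameter_comparable:
  defines "\<delta> \<equiv> \<eta> / (m * distortion_bound)"
  assumes "orbit_diameter n < \<delta> \<or> (1/r) ^ n * orbit_diameter 0 < \<delta>"
  shows "(1 / distortion_bound) * (1/r) ^ n * orbit_diameter 0 \<le> orbit_diameter n
    \<and> orbit_diameter n \<le> distortion_bound * (1/r) ^ n * orbit_diameter 0"
proof -
  have K: "distortion_bound \<ge> 1" "real m * distortion_bound \<ge> distortion_bound"
    using distortion_bound_ge_1 number_of_maps_pos by simp_all
  have "\<delta> \<ge> 0"
    using assms(2) orbit_diameter_nonneg ratio_pos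
    by (smt (verit) mult_nonneg_nonneg zero_le_divide_1_iff zero_le_power)
  have \<delta>: "m * distortion_bound * \<delta> = \<eta>" using K by (simp add: \<delta>_def)
  moreover have "distortion_bound * \<delta> \<le> m * distortion_bound * \<delta>"
    using mult_right_mono[OF K(2) \<open>\<delta> \<ge> 0\<close>] by simp
  ultimately have \<delta>': "distortion_bound * \<delta> \<le> \<eta>" by simp
  have "\<forall>j\<le>n. orbit_diameter j < \<eta>"
  proof (cases "orbit_diameter n < \<delta>")
    case True
    then have "m * distortion_bound * orbit_diameter n < m * distortion_bound * \<delta>"
      using K by (intro mult_strict_left_mono) auto
    then show ?thesis using \<delta> by (intro orbit_diameter_small_backward) simp
  next
    case False
    then have "distortion_bound * ((1/r) ^ n * orbit_diameter 0) < distortion_bound * \<delta>"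
      using assms(2) K by (intro mult_strict_left_mono) auto
    then show ?thesis using \<delta>' by (intro orbit_diameter_small_forward) simp
  qed
  then have "orbit_diameter n \<le> distortion_bound * ((1/r) ^ n * orbit_diameter 0)"
    and lower: "(1/r) ^ n * orbit_diameter 0 \<le> distortion_bound * orbit_diameter n"
    using orbit_diameter_distortion[of 0 n] by simp_all
  moreover have "(1 / distortion_bound) * ((1/r) ^ n * orbit_diameter 0) \<le> orbit_diameter n"
    using mult_left_mono[OF lower, of "1 / distortion_bound"] K by simp
  ultimately show ?thesis by (simp add: mult.assoc)
qed

end

theorem lemma3p4:
  fixes m :: nat and f :: "nat \<Rightarrow> complex \<Rightarrow> complex" and r :: real
    and A :: "complex set" and q :: "complex \<Rightarrow> complex"
  assumes "m \<ge> 2"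
    and "0 < r" and "r < 1"
    and "\<forall>j<m. similarity_ratio r (f j)"
    and "ifs_attractor m f A"
    and "connected A"
    and "ifs_inverse_map m f A q"
    and "finite (overlap_set m f A)" and "overlap_set m f A \<noteq> {}"
    and "critically_non_recurrent (overlap_set m f A) q"
  shows "\<exists>C\<ge>1. \<exists>\<delta>1>0. \<forall>S n. connected S \<and> S \<subseteq> A \<and>
            (diameter ((q ^^ n) ` S) < \<delta>1 \<or> (1 / r) ^ n * diameter S < \<delta>1) \<longrightarrow>
              (1 / C) * (1 / r) ^ n * diameter S \<le> diameter ((q ^^ n) ` S) \<and>
              diameter ((q ^^ n) ` S) \<le> C * (1 / r) ^ n * diameter S"
proof -
  interpret invertible_ifs m f r A q using assms by unfold_locales auto
  obtain \<eta> where \<eta>: "\<eta> > 0" "\<forall>p\<in>overlap_set m f A. \<forall>n\<ge>1. \<eta> \<le> dist ((q ^^ n) p) p"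
    using uniform_orbit_separation assms(8,10) unfolding critically_non_recurrent_def by blast
  have "(1 / distortion_bound) * (1 / r) ^ n * diameter S \<le> diameter ((q ^^ n) ` S)
      \<and> diameter ((q ^^ n) ` S) \<le> distortion_bound * (1 / r) ^ n * diameter S"
    if "connected S \<and> S \<subseteq> A \<and> (diameter ((q ^^ n) ` S) < \<eta> / (m * distortion_bound)
      \<or> (1 / r) ^ n * diameter S < \<eta> / (m * distortion_bound))" for S n
  proof -
    interpret invertible_ifs_orbit m f r A q S \<eta>
      using that \<eta>(2) assms(8) by unfold_locales auto
    show ?thesis
      using orbit_diameter_comparable[of n] that by (simp add: orbit_diameter_def)
  qed
  moreover have "\<eta> / (m * distortion_bound) > 0"
    using \<eta>(1) distortion_bound_ge_1 number_of_maps_pos by simp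
  ultimately show ?thesis using distortion_bound_ge_1 by blast
qed

end
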